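(* Let $\mathcal{P}\subset\mathbb{R}^d$ be finite, $r>0$, and let $\eta$ be a singular $k$-cycle in $\mathcal{U}(\mathcal{P},r)$ with filling radius $R_{fill}(\eta)=R$. Then $\eta_{death}\le R+r$.
   Context: $\mathcal{U}(\mathcal{P},r)=\bigcup_{p\in\mathcal{P}}B_r(p)$ (closed Euclidean balls); for a set $X$ (e.g. the image of a chain), $\mathcal{U}(X,\rho)$ denotes its closed $\rho$-neighborhood. Homology has coefficients in $\mathbb{Z}/2\mathbb{Z}$. A filling of a compactly supported singular $k$-cycle $\eta$ is a singular $(k+1)$-chain $\Gamma$ in $\mathbb{R}^d$ with $\partial\Gamma=\eta$; the filling radius is $R_{fill}(\eta)=\inf\{\rho>0:\exists\,\Gamma\text{ with }\partial\Gamma=\eta\text{ and }\Gamma\subset\mathcal{U}(\eta,\rho)\}$ (chains identified with the union of images of their simplices). The death time $\eta_{death}$ is, in the filtration $\{\mathcal{U}(\mathcal{P},s)\}_{s\ge0}$, the smallest $s\ge r$ at which the class of (the image of) $\eta$ becomes trivial in $H_k(\mathcal{U}(\mathcal{P},s))$. *)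

theory Defs
  imports "HOL-Analysis.Analysis" "HOL-Homology.Homology"
begin

text \<open>Singular chains with coefficients in Z/2Z: a Z/2 singular p-chain in a
  space X is a finite set of singular p-simplices (those with coefficient 1).\<close>

definition z2_chain :: "nat \<Rightarrow> 'a topology \<Rightarrow> ((nat \<Rightarrow> real) \<Rightarrow> 'a) set \<Rightarrow> bool" where
  "z2_chain p X C \<longleftrightarrow> finite C \<and> (\<forall>\<sigma>\<in>C. singular_simplex p X \<sigma>)"

definition z2_boundary :: "nat \<Rightarrow> ((nat \<Rightarrow> real) \<Rightarrow> 'a) set \<Rightarrow> ((nat \<Rightarrow> real) \<Rightarrow> 'a) set" where
  "z2_boundary p C =
     (if p = 0 then {}
      else {\<tau>. odd (card {(\<sigma>, i). \<sigma> \<in> C \<and> i \<le> p \<and> singular_face p i \<sigma> = \<tau>})})"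

definition z2_cycle :: "nat \<Rightarrow> 'a topology \<Rightarrow> ((nat \<Rightarrow> real) \<Rightarrow> 'a) set \<Rightarrow> bool" where
  "z2_cycle p X C \<longleftrightarrow> z2_chain p X C \<and> z2_boundary p C = {}"

definition z2_null_homologous :: "nat \<Rightarrow> 'a topology \<Rightarrow> ((nat \<Rightarrow> real) \<Rightarrow> 'a) set \<Rightarrow> bool" where
  "z2_null_homologous p X C \<longleftrightarrow>
     (\<exists>\<Gamma>. z2_chain (Suc p) X \<Gamma> \<and> z2_boundary (Suc p) \<Gamma> = C)"

definition chain_image :: "nat \<Rightarrow> ((nat \<Rightarrow> real) \<Rightarrow> 'a) set \<Rightarrow> 'a set" where
  "chain_image p C = (\<Union>\<sigma>\<in>C. \<sigma> ` standard_simplex p)"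

definition ball_union :: "'a::metric_space set \<Rightarrow> real \<Rightarrow> 'a set" where
  "ball_union S r = (\<Union>p\<in>S. cball p r)"

definition filling_radius :: "nat \<Rightarrow> ((nat \<Rightarrow> real) \<Rightarrow> 'a::euclidean_space) set \<Rightarrow> real" where
  "filling_radius k \<eta> =
     Inf {\<rho>. \<rho> > 0 \<and> (\<exists>\<Gamma>. z2_chain (Suc k) (top_of_set UNIV) \<Gamma> \<and>
                              z2_boundary (Suc k) \<Gamma> = \<eta> \<and>
                              chain_image (Suc k) \<Gamma> \<subseteq> ball_union (chain_image k \<eta>) \<rho>)}"

definition death_time :: "nat \<Rightarrow> 'a::euclidean_space set \<Rightarrow> real \<Rightarrow> ((nat \<Rightarrow> real) \<Rightarrow> 'a) set \<Rightarrow> real" where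
  "death_time k P r \<eta> =
     Inf {s. s \<ge> r \<and> z2_null_homologous k (top_of_set (ball_union P s)) \<eta>}"

end

theory Submission
  imports Defs
begin

text \<open>A filling of \<open>\<eta>\<close> inside the \<open>\<rho>\<close>-neighbourhood of \<open>\<eta>\<close>, where \<open>\<eta>\<close> itself lies in
  \<open>\<U>(P, r)\<close>, already lies in \<open>\<U>(P, r + \<rho>)\<close>; hence it kills \<open>\<eta>\<close> at time \<open>r + \<rho>\<close>, and
  \<open>\<eta>\<^sub>d\<^sub>e\<^sub>a\<^sub>t\<^sub>h \<le> r + \<rho>\<close> for every admissible \<open>\<rho>\<close>.  If no admissible \<open>\<rho>\<close> exists, \<open>\<eta>\<close> bounds in
  no \<open>\<U>(P, s)\<close> either, because such a filling would lie in a bounded set and thus within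
  some finite distance of \<open>\<eta>\<close>; both infima are then taken over the empty set.\<close>

definition filling_radii :: "nat \<Rightarrow> ((nat \<Rightarrow> real) \<Rightarrow> 'a::metric_space) set \<Rightarrow> real set" where
  "filling_radii k \<eta> =
     {\<rho>. \<rho> > 0 \<and> (\<exists>\<Gamma>. z2_chain (Suc k) (top_of_set UNIV) \<Gamma> \<and>
                        z2_boundary (Suc k) \<Gamma> = \<eta> \<and>
                        chain_image (Suc k) \<Gamma> \<subseteq> ball_union (chain_image k \<eta>) \<rho>)}"

definition death_radii :: "nat \<Rightarrow> 'a::metric_space set \<Rightarrow> real \<Rightarrow> ((nat \<Rightarrow> real) \<Rightarrow> 'a) set \<Rightarrow> real set" where
  "death_radii k P r \<eta> = {s. s \<ge> r \<and> z2_null_homologous k (top_of_set (ball_union P s)) \<eta>}"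

lemma filling_radius_eq_Inf: "filling_radius k \<eta> = Inf (filling_radii k \<eta>)"
  by (simp add: filling_radius_def filling_radii_def)

lemma death_time_eq_Inf: "death_time k P r \<eta> = Inf (death_radii k P r \<eta>)"
  by (simp add: death_time_def death_radii_def)

lemma z2_chain_subtopology_iff:
  "z2_chain p (top_of_set T) C \<longleftrightarrow> z2_chain p (top_of_set UNIV) C \<and> chain_image p C \<subseteq> T"
  by (auto simp: z2_chain_def chain_image_def singular_simplex_subtopology)

lemma ball_union_mono: "A \<subseteq> B \<Longrightarrow> ball_union A a \<subseteq> ball_union B a"
  by (auto simp: ball_union_def)

lemma ball_union_ball_union_subset: "ball_union (ball_union A a) b \<subseteq> ball_union A (a + b)"
  by (auto simp: ball_union_def) (meson add_mono dist_triangle order_trans)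

lemma bounded_ball_union: "finite P \<Longrightarrow> bounded (ball_union P s)"
  by (auto simp: ball_union_def)

lemma cball_subset_ball_union: "x \<in> A \<Longrightarrow> cball x e \<subseteq> ball_union A e"
  by (auto simp: ball_union_def)

lemma filling_radius_imp_death_radius:
  assumes "chain_image k \<eta> \<subseteq> ball_union P r" and "\<rho> \<in> filling_radii k \<eta>"
  shows "r + \<rho> \<in> death_radii k P r \<eta>"
proof -
  obtain \<Gamma> where \<rho>: "\<rho> > 0" and \<Gamma>: "z2_chain (Suc k) (top_of_set UNIV) \<Gamma>"
      "z2_boundary (Suc k) \<Gamma> = \<eta>" "chain_image (Suc k) \<Gamma> \<subseteq> ball_union (chain_image k \<eta>) \<rho>"
    using assms(2) by (auto simp: filling_radii_def)
  have "chain_image (Suc k) \<Gamma> \<subseteq> ball_union P (r + \<rho>)"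
    using \<Gamma>(3) ball_union_mono[OF assms(1)] ball_union_ball_union_subset by blast
  with \<Gamma> \<rho> show ?thesis
    by (auto simp: death_radii_def z2_null_homologous_def z2_chain_subtopology_iff)
qed

lemma null_homologous_in_bounded_imp_filling_radii_ne:
  assumes "bounded T" and "z2_null_homologous k (top_of_set T) \<eta>"
  shows "filling_radii k \<eta> \<noteq> {}"
proof -
  obtain \<Gamma> where \<Gamma>: "z2_chain (Suc k) (top_of_set UNIV) \<Gamma>" "z2_boundary (Suc k) \<Gamma> = \<eta>"
      "chain_image (Suc k) \<Gamma> \<subseteq> T"
    using assms(2) by (auto simp: z2_null_homologous_def z2_chain_subtopology_iff)
  show ?thesis
  proof (cases "chain_image k \<eta> = {}")
    case True
    then have "\<eta> = {}"
      by (auto simp: chain_image_def nonempty_standard_simplex)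
    then have "1 \<in> filling_radii k \<eta>"
      unfolding filling_radii_def
      by (intro CollectI conjI exI[of _ "{}"])
         (auto simp: z2_chain_def z2_boundary_def chain_image_def)
    then show ?thesis by blast
  next
    case False
    then obtain x where x: "x \<in> chain_image k \<eta>" by blast
    obtain e where e: "\<forall>y\<in>T. dist x y \<le> e"
      using assms(1) bounded_any_center by blast
    have "T \<subseteq> ball_union (chain_image k \<eta>) (max e 1)"
      using e cball_subset_ball_union[OF x, of "max e 1"] by fastforce
    with \<Gamma> have "max e 1 \<in> filling_radii k \<eta>"
      unfolding filling_radii_def by auto
    then show ?thesis by blast
  qed
qed

theorem lemma6p6:
  fixes P :: "'a::euclidean_space set" and r R :: real and k :: nat
    and \<eta> :: "((nat \<Rightarrow> real) \<Rightarrow> 'a) set"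
  assumes "finite P" and "r > 0"
    and "z2_cycle k (top_of_set (ball_union P r)) \<eta>"
    and "filling_radius k \<eta> = R"
  shows "death_time k P r \<eta> \<le> R + r"
proof (cases "filling_radii k \<eta> = {}")
  case True
  then have "death_radii k P r \<eta> = {}"
    using null_homologous_in_bounded_imp_filling_radii_ne[OF bounded_ball_union[OF assms(1)]]
    by (auto simp: death_radii_def)
  with True assms(2,4) show ?thesis
    by (simp add: filling_radius_eq_Inf death_time_eq_Inf)
next
  case False
  have "chain_image k \<eta> \<subseteq> ball_union P r"
    using assms(3) by (simp add: z2_cycle_def z2_chain_subtopology_iff)
  then have killed: "r + \<rho> \<in> death_radii k P r \<eta>" if "\<rho> \<in> filling_radii k \<eta>" for \<rho>
    using filling_radius_imp_death_radius that by blast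
  have "bdd_below (death_radii k P r \<eta>)"
    by (auto simp: death_radii_def bdd_below_def)
  then have "Inf (death_radii k P r \<eta>) - r \<le> Inf (filling_radii k \<eta>)"
    using False killed by (intro cInf_greatest) (auto simp: cInf_lower algebra_simps)
  with assms(4) show ?thesis
    by (simp add: filling_radius_eq_Inf death_time_eq_Inf)
qed

end
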